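(* Let $\tau_i\in\tau_H$ be a HI-task in the multi-rate fluid model with earliest completion window $k_i$, and suppose $$\sum_{j:1\le j<k_i}\theta_{i,j}^H w_j\ \ge\ u_i^H\sum_{j:1\le j<k_i}w_j \qquad\text{and}\qquad \forall j:\ 1\le j<k_i,\ \ \theta_{i,j}^H\le\theta_{i,j+1}^H .$$ Then for every time instant $t$ (measured from the mode switch) with $0\le t\le \sum_{j:1\le j<k_i}w_j$, the total execution assigned to $\tau_i$ in the interval $[t,\sum_{j:1\le j<k_i}w_j]$ (i.e., the integral over this interval of $\tau_i$'s piecewise-constant transition rate, which equals $\theta_{i,j}^H$ on window $j$) is at least $\big(\sum_{j:1\le j<k_i}w_j-t\big)\,u_i^H$.
   Context: Dual-criticality implicit-deadline sporadic tasks: task $\tau_i$ has period/relative deadline $T_i>0$, WCETs $C_i^L\le C_i^H$, $u_i^H=C_i^H/T_i\le1$; $n_H$ is the number of HI-tasks. Multi-rate fluid model: in LO-mode each job of $\tau_i$ executes at rate $\theta_i^L\in(0,1]$; after the mode switch (time $0$), the transition period $[0,\sum_{j=1}^{n_H}w_j)$ is divided into consecutive windows of durations $w_1,\dots,w_{n_H}\ge0$, window $j$ being $[\sum_{l<j}w_l,\sum_{l\le j}w_l)$, in which HI-task $\tau_i$ executes at rate $\theta_{i,j}^H\in[0,1]$; afterwards it executes at rate $\theta_i^H$. By convention $\theta_{i,n_H+1}^H$ denotes $\theta_i^H$. The earliest completion window of $\tau_i$ is the largest index $k_i\in\{1,\dots,n_H+1\}$ with $\sum_{j:1\le j<k_i}w_j<T_i-C_i^L/\theta_i^L$.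 *)

theory Defs
  imports "HOL-Analysis.Analysis"
begin

text \<open>Windows are indexed 1..nH; w j is the duration of window j.
  Window j is the interval [sum_{l<j} w l, sum_{l<=j} w l).\<close>

definition window :: "(nat \<Rightarrow> real) \<Rightarrow> nat \<Rightarrow> real set" where
  "window w j = {(\<Sum>l\<in>{1..<j}. w l) ..< (\<Sum>l\<in>{1..j}. w l)}"

text \<open>Piecewise-constant transition rate of a HI-task after the mode switch (time 0):
  theta j on window j (1 <= j <= nH), and theta (nH+1) (= the HI-mode rate) afterwards.\<close>

definition trans_rate :: "nat \<Rightarrow> (nat \<Rightarrow> real) \<Rightarrow> (nat \<Rightarrow> real) \<Rightarrow> real \<Rightarrow> real" where
  "trans_rate nH w theta t =
     (if \<exists>j\<in>{1..nH}. t \<in> window w j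
      then theta (THE j. j \<in> {1..nH} \<and> t \<in> window w j)
      else theta (nH + 1))"

definition earliest_completion_window ::
  "nat \<Rightarrow> (nat \<Rightarrow> real) \<Rightarrow> real \<Rightarrow> real \<Rightarrow> real \<Rightarrow> nat \<Rightarrow> bool" where
  "earliest_completion_window nH w T CL thetaL k \<longleftrightarrow>
     k \<in> {1..nH+1} \<and> (\<Sum>j\<in>{1..<k}. w j) < T - CL / thetaL \<and>
     (\<forall>k'\<in>{1..nH+1}. (\<Sum>j\<in>{1..<k'}. w j) < T - CL / thetaL \<longrightarrow> k' \<le> k)"

end

theory Submission
  imports Defs
begin

text \<open>Up to the end W of the windows before the earliest completion window, the transition
  rate is a nondecreasing step function, and the averaging hypothesis says that its integral
  over [0, W] is at least u_i^H W. For a nondecreasing function the mean over a tail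
  [t, W] dominates the mean over the whole interval [0, W].\<close>

lemma mono_on_tail_integral_ge:
  fixes f :: "real \<Rightarrow> real" and a b t u :: real
  assumes f_int: "f integrable_on {a..b}"
    and f_mono: "mono_on {a..<b} f"
    and mean: "u * (b - a) \<le> integral {a..b} f"
    and t: "a \<le> t" "t \<le> b"
  shows "(b - t) * u \<le> integral {t..b} f"
proof (cases "t = b")
  case False
  with t have "t < b" by simp
  define m where "m = f t"
  define A where "A = integral {a..t} f"
  define B where "B = integral {t..b} f"
  have "f integrable_on {a..t}" "f integrable_on {t..b}"
    using f_int t by (auto intro: integrable_subinterval_real)
  have head: "A \<le> (t - a) * m"
  proof -
    have "A \<le> integral {a..t} (\<lambda>_. m)"
      unfolding A_def using \<open>f integrable_on {a..t}\<close> \<open>t < b\<close> t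
      by (intro integral_le) (auto simp: m_def intro!: mono_onD[OF f_mono])
    then show ?thesis using t by simp
  qed
  have tail: "(b - t) * m \<le> B"
  proof -
    \<comment> \<open>monotonicity is only known on the half-open interval, so the endpoint b is a spike\<close>
    have "B = integral {t..b} (\<lambda>x. if x = b then m else f x)"
      unfolding B_def by (rule integral_spike[of "{b}"]) auto
    moreover have "(\<lambda>x. if x = b then m else f x) integrable_on {t..b}"
      by (rule integrable_spike_finite[of "{b}" _ _ f]) (use \<open>f integrable_on {t..b}\<close> in auto)
    then have "integral {t..b} (\<lambda>_. m) \<le> integral {t..b} (\<lambda>x. if x = b then m else f x)"
      by (rule integral_le[OF integrable_const_ivl])
        (use t in \<open>auto simp: m_def intro!: mono_onD[OF f_mono]\<close>)
    ultimately show ?thesis using t by simp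
  qed
  have "integral {a..b} f = A + B"
    unfolding A_def B_def using Henstock_Kurzweil_Integration.integral_combine[OF t f_int] by simp
  with mean have sum_ge: "u * (b - a) \<le> A + B" by simp
  have "(b - a) * ((b - t) * u) = (b - t) * (u * (b - a))" by (simp add: algebra_simps)
  also have "\<dots> \<le> (b - t) * (A + B)" using sum_ge \<open>t < b\<close> by (intro mult_left_mono) auto
  also have "\<dots> \<le> (b - t) * ((t - a) * m) + (b - t) * B"
    using head \<open>t < b\<close> by (simp add: distrib_left)
  also have "\<dots> \<le> (t - a) * B + (b - t) * B"
    using mult_left_mono[OF tail, of "t - a"] t by (simp add: algebra_simps)
  also have "\<dots> = (b - a) * B" by (simp add: algebra_simps)
  finally show ?thesis
    unfolding B_def using t \<open>t < b\<close> by (simp add: mult_le_cancel_left)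
qed simp

definition window_start :: "(nat \<Rightarrow> real) \<Rightarrow> nat \<Rightarrow> real" where
  "window_start w j = (\<Sum>l\<in>{1..<j}. w l)"

lemma window_start_0 [simp]: "window_start w 0 = 0"
  and window_start_Suc_0 [simp]: "window_start w (Suc 0) = 0"
  by (simp_all add: window_start_def)

lemma window_start_Suc: "1 \<le> j \<Longrightarrow> window_start w (Suc j) = window_start w j + w j"
  by (simp add: window_start_def)

lemma window_eq_atLeastLessThan: "window w j = {window_start w j..<window_start w (Suc j)}"
  by (simp add: window_def window_start_def atLeastLessThanSuc_atLeastAtMost)

lemma window_start_mono:
  assumes "i \<le> j" and "\<And>l. 1 \<le> l \<Longrightarrow> l < j \<Longrightarrow> 0 \<le> w l"
  shows "window_start w i \<le> window_start w j"
  unfolding window_start_def using assms by (intro sum_mono2) auto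

lemma window_index_le:
  assumes w_nonneg: "\<And>l. l \<in> {1..n} \<Longrightarrow> 0 \<le> w l"
    and "i \<le> n" "x \<in> window w i" "y \<in> window w j" "x \<le> y"
  shows "i \<le> j"
proof (rule ccontr)
  assume "\<not> i \<le> j"
  then have "window_start w (Suc j) \<le> window_start w i"
    using assms by (intro window_start_mono) auto
  with assms(3-5) show False by (auto simp: window_eq_atLeastLessThan)
qed

lemma trans_rate_on_window:
  assumes w_nonneg: "\<And>l. l \<in> {1..n} \<Longrightarrow> 0 \<le> w l"
    and "j \<in> {1..n}" "s \<in> window w j"
  shows "trans_rate n w theta s = theta j"
proof -
  have "i = j" if "i \<in> {1..n}" "s \<in> window w i" for i
    using window_index_le[where n = n and w = w and i = i and j = j and x = s and y = s, OF w_nonneg]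
      window_index_le[where n = n and w = w and i = j and j = i and x = s and y = s, OF w_nonneg]
      that assms
    by auto
  then have "(THE i. i \<in> {1..n} \<and> s \<in> window w i) = j"
    using assms by blast
  with assms show ?thesis by (auto simp: trans_rate_def)
qed

lemma mem_window_below_start:
  assumes "0 \<le> s" "s < window_start w m"
  shows "\<exists>j\<in>{1..<m}. s \<in> window w j"
  using assms(2)
proof (induction m)
  case (Suc m)
  show ?case
  proof (cases "s < window_start w m")
    case True
    with Suc.IH show ?thesis by auto
  next
    case False
    with Suc.prems assms(1) have "m \<noteq> 0" by (cases m) auto
    have "s \<in> window w m" using False Suc.prems by (simp add: window_eq_atLeastLessThan)
    with \<open>m \<noteq> 0\<close> show ?thesis by auto
  qed
qed (use assms(1) in simp)

lemma has_integral_trans_rate: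
  assumes w_nonneg: "\<And>l. l \<in> {1..n} \<Longrightarrow> 0 \<le> w l"
    and "m \<le> n + 1"
  shows "(trans_rate n w theta has_integral (\<Sum>j\<in>{1..<m}. theta j * w j)) {0..window_start w m}"
  using assms(2)
proof (induction m)
  case (Suc m)
  show ?case
  proof (cases "m = 0")
    case False
    then have m: "m \<in> {1..n}" using Suc.prems by auto
    have le: "0 \<le> window_start w m" "window_start w m \<le> window_start w (Suc m)"
      using window_start_mono[of 0 m w] window_start_mono[of m "Suc m" w] m w_nonneg by auto
    have const: "((\<lambda>_. theta m) has_integral theta m * w m) {window_start w m..window_start w (Suc m)}"
      using has_integral_const_real[of "theta m" "window_start w m" "window_start w (Suc m)"] le m
      by (simp add: window_start_Suc mult.commute)
    have "(trans_rate n w theta has_integral theta m * w m)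
        {window_start w m..window_start w (Suc m)}"
    proof (rule has_integral_spike_finite[where S = "{window_start w (Suc m)}", OF _ _ const])
      fix x assume "x \<in> {window_start w m..window_start w (Suc m)} - {window_start w (Suc m)}"
      then have "x \<in> window w m" by (auto simp: window_eq_atLeastLessThan)
      then show "trans_rate n w theta x = theta m"
        using trans_rate_on_window[where n = n and w = w, OF w_nonneg m] by simp
    qed simp
    with Suc have "(trans_rate n w theta has_integral
        (\<Sum>j\<in>{1..<m}. theta j * w j) + theta m * w m) {0..window_start w (Suc m)}"
      by (intro has_integral_combine[OF le]) auto
    with False show ?thesis by simp
  qed (simp add: has_integral_refl)
qed (simp add: has_integral_refl)

lemma mono_on_trans_rate:
  assumes w_nonneg: "\<And>l. l \<in> {1..n} \<Longrightarrow> 0 \<le> w l"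
    and "k \<le> n + 1"
    and theta_mono: "\<And>i j. 1 \<le> i \<Longrightarrow> i \<le> j \<Longrightarrow> j < k \<Longrightarrow> theta i \<le> theta j"
  shows "mono_on {0..<window_start w k} (trans_rate n w theta)"
proof (rule mono_onI)
  fix x y assume xy: "x \<in> {0..<window_start w k}" "y \<in> {0..<window_start w k}" "x \<le> y"
  then obtain i j where i: "i \<in> {1..<k}" "x \<in> window w i" and j: "j \<in> {1..<k}" "y \<in> window w j"
    by (meson atLeastLessThan_iff mem_window_below_start)
  have "i \<le> j"
    by (rule window_index_le[where n = n and w = w, OF w_nonneg]) (use i j xy(3) assms(2) in auto)
  moreover have "trans_rate n w theta x = theta i" "trans_rate n w theta y = theta j"
    using i j assms(2) by (auto intro: trans_rate_on_window[where n = n and w = w, OF w_nonneg])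
  ultimately show "trans_rate n w theta x \<le> trans_rate n w theta y"
    using i j theta_mono by simp
qed

theorem lemma1:
  fixes nH k :: nat and w theta :: "nat \<Rightarrow> real"
    and T CL CH thetaL t :: real
  assumes HI: "nH \<ge> 1"
    and T_pos: "T > 0"
    and C_ge: "0 \<le> CL" "CL \<le> CH"
    and uH_le: "CH / T \<le> 1"
    and thetaL: "0 < thetaL" "thetaL \<le> 1"
    and theta_range: "\<And>j. j \<in> {1..nH+1} \<Longrightarrow> 0 \<le> theta j \<and> theta j \<le> 1"
    and w_nonneg: "\<And>j. j \<in> {1..nH} \<Longrightarrow> w j \<ge> 0"
    and k: "earliest_completion_window nH w T CL thetaL k"
    and sum_cond: "(\<Sum>j\<in>{1..<k}. theta j * w j) \<ge> (CH / T) * (\<Sum>j\<in>{1..<k}. w j)"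
    and mono: "\<And>j. 1 \<le> j \<Longrightarrow> j < k \<Longrightarrow> theta j \<le> theta (j + 1)"
    and t: "0 \<le> t" "t \<le> (\<Sum>j\<in>{1..<k}. w j)"
  shows "trans_rate nH w theta integrable_on {t..(\<Sum>j\<in>{1..<k}. w j)} \<and>
         integral {t..(\<Sum>j\<in>{1..<k}. w j)} (trans_rate nH w theta)
           \<ge> ((\<Sum>j\<in>{1..<k}. w j) - t) * (CH / T)"
proof -
  have "k \<le> nH + 1" using k by (simp add: earliest_completion_window_def)
  have theta_mono: "theta i \<le> theta j" if "1 \<le> i" "i \<le> j" "j < k" for i j
    by (rule lift_Suc_mono_le_ivl[of "{1..<k}"]) (use mono that in auto)
  have rate_integral:
    "(trans_rate nH w theta has_integral (\<Sum>j\<in>{1..<k}. theta j * w j)) {0..window_start w k}"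
    using w_nonneg \<open>k \<le> nH + 1\<close> by (rule has_integral_trans_rate)
  then have integrable: "trans_rate nH w theta integrable_on {0..window_start w k}"
    by (rule has_integral_integrable)
  have rate_mono: "mono_on {0..<window_start w k} (trans_rate nH w theta)"
    using w_nonneg \<open>k \<le> nH + 1\<close> theta_mono by (rule mono_on_trans_rate)
  have mean: "(CH / T) * (window_start w k - 0) \<le> integral {0..window_start w k} (trans_rate nH w theta)"
    using sum_cond integral_unique[OF rate_integral] by (simp add: window_start_def)
  have t': "0 \<le> t" "t \<le> window_start w k" using t by (simp_all add: window_start_def)
  have "trans_rate nH w theta integrable_on {t..window_start w k}"
    by (rule integrable_subinterval_real[OF integrable]) (use t' in auto)
  moreover have "(window_start w k - t) * (CH / T) \<le> integral {t..window_start w k} (trans_rate nH w theta)"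
    by (rule mono_on_tail_integral_ge[OF integrable rate_mono mean t'])
  ultimately show ?thesis by (simp add: window_start_def)
qed

end
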